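(* Let $d\ge 2$ and let $P_1,\dots,P_m$ be pumpkin graphs all of degree $d$, where $P_i$ has edge length $\ell_i>0$ (lengths may differ between different $P_i$). For a permutation $\sigma$ of $\{1,\dots,m\}$, let $C_\sigma$ be the chain $P_{\sigma(1)},P_{\sigma(2)},\dots,P_{\sigma(m)}$, i.e. the graph obtained by identifying the second vertex of $P_{\sigma(i)}$ with the first vertex of $P_{\sigma(i+1)}$ for $i=1,\dots,m-1$; its two end vertices are the first vertex $a_\sigma$ of $P_{\sigma(1)}$ and the second vertex $b_\sigma$ of $P_{\sigma(m)}$. Then: (i) the spectrum of $\mathbf{L}(C_\sigma)$ with standard vertex conditions does not depend on $\sigma$; (ii) more generally, for any compact metric graphs $G$, $H$ with chosen vertices $g\in G$, $h\in H$, the graph obtained from $C_\sigma$ by identifying $a_\sigma$ with $g$ and $b_\sigma$ with $h$ has spectrum independent of $\sigma$; and likewise for any compact graph $G$ with two chosen vertices $g_1,g_2$, the graph obtained by identifying $a_\sigma$ with $g_1$ and $b_\sigma$ with $g_2$ has spectrum independent of $\sigma$. In particular each end vertex of such a chain is a hot vertex.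
   Context: A pumpkin graph of degree $d$ with edge length $\ell$ consists of two vertices joined by $d$ parallel edges, each of length $\ell$ (a loop is regarded as a pumpkin graph of degree $2$, two vertices joined by two edges). On each edge the operator is $\mathbf{L}=-\frac{d^2}{dx^2}$ with standard (Neumann–Kirchhoff) vertex conditions: continuity at each vertex and vanishing sum of outward normal derivatives. Spectra are taken with multiplicities. A vertex of a graph (within a family of isospectral graphs) is called hot if attaching (by identifying one of its vertices with the hot vertex) the same arbitrary compact graph at that vertex in each member of the family yields isospectral graphs. *)

theory Defs
  imports "HOL-Analysis.Analysis" "HOL-Library.Extended_Nat"
begin

text \<open>A compact metric graph: finitely many vertices and edges; each edge e is
  identified with the interval [0, len e], the point 0 sitting at vertex src e
  and the point len e sitting at vertex tgt e (loops allowed, multiple edges allowed).\<close>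

record ('v, 'e) mgraph =
  verts :: "'v set"
  edges :: "'e set"
  src :: "'e \<Rightarrow> 'v"
  tgt :: "'e \<Rightarrow> 'v"
  len :: "'e \<Rightarrow> real"

definition wf_mgraph :: "('v, 'e) mgraph \<Rightarrow> bool" where
  "wf_mgraph G \<longleftrightarrow> finite (verts G) \<and> finite (edges G) \<and>
     (\<forall>e\<in>edges G. src G e \<in> verts G \<and> tgt G e \<in> verts G \<and> len G e > 0)"

text \<open>Eigenfunction (possibly zero) of L = -d^2/dx^2 with standard
  (continuity + Kirchhoff) vertex conditions, for the eigenvalue lam.
  The function on edge e is phi e, considered on [0, len e].\<close>

definition eigenfunction :: "('v, 'e) mgraph \<Rightarrow> real \<Rightarrow> ('e \<Rightarrow> real \<Rightarrow> real) \<Rightarrow> bool" where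
  "eigenfunction G lam phi \<longleftrightarrow>
     (\<forall>e\<in>edges G. \<exists>phi'.
        \<forall>x\<in>{0..len G e}.
          (phi e has_real_derivative phi' x) (at x within {0..len G e}) \<and>
          (phi' has_real_derivative (- lam * phi e x)) (at x within {0..len G e})) \<and>
     \<comment> \<open>continuity at each vertex\<close>
     (\<forall>v\<in>verts G. \<forall>e1\<in>edges G. \<forall>e2\<in>edges G. \<forall>x1 x2.
        ((src G e1 = v \<and> x1 = 0) \<or> (tgt G e1 = v \<and> x1 = len G e1)) \<longrightarrow>
        ((src G e2 = v \<and> x2 = 0) \<or> (tgt G e2 = v \<and> x2 = len G e2)) \<longrightarrow>
        phi e1 x1 = phi e2 x2) \<and>
     \<comment> \<open>Kirchhoff: the sum of outward normal derivatives vanishes\<close>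
     (\<forall>v\<in>verts G.
        (\<Sum>e\<in>{e\<in>edges G. src G e = v}. vector_derivative (phi e) (at 0 within {0..len G e}))
      - (\<Sum>e\<in>{e\<in>edges G. tgt G e = v}. vector_derivative (phi e) (at (len G e) within {0..len G e}))
      = 0)"

definition lin_indep_on :: "('v, 'e) mgraph \<Rightarrow> nat \<Rightarrow> (nat \<Rightarrow> 'e \<Rightarrow> real \<Rightarrow> real) \<Rightarrow> bool" where
  "lin_indep_on G n Phi \<longleftrightarrow>
     (\<forall>c :: nat \<Rightarrow> real.
        (\<forall>e\<in>edges G. \<forall>x\<in>{0..len G e}. (\<Sum>i<n. c i * Phi i e x) = 0) \<longrightarrow> (\<forall>i<n. c i = 0))"

text \<open>Multiplicity of lam: dimension of the eigenspace (0 if lam is not an eigenvalue).\<close>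

definition eig_mult :: "('v, 'e) mgraph \<Rightarrow> real \<Rightarrow> enat" where
  "eig_mult G lam = Sup {enat n | n. \<exists>Phi. (\<forall>i<n. eigenfunction G lam (Phi i)) \<and> lin_indep_on G n Phi}"

definition isospectral :: "('v, 'e) mgraph \<Rightarrow> ('w, 'f) mgraph \<Rightarrow> bool" where
  "isospectral G H \<longleftrightarrow> (\<forall>lam. eig_mult G lam = eig_mult H lam)"

text \<open>Vertices 0..m; the pumpkin in position i has d parallel edges (i,j), j<d,
  from vertex i to vertex i+1. End vertices: 0 and m.\<close>

definition pumpkin_chain :: "nat \<Rightarrow> (nat \<Rightarrow> real) \<Rightarrow> nat \<Rightarrow> (nat \<Rightarrow> nat) \<Rightarrow> (nat, nat \<times> nat) mgraph" where
  "pumpkin_chain d l m \<sigma> =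
     \<lparr> verts = {0..m}, edges = {(i, j). i < m \<and> j < d},
       src = (\<lambda>(i, j). i), tgt = (\<lambda>(i, j). Suc i), len = (\<lambda>(i, j). l (\<sigma> i)) \<rparr>"

definition glue_two :: "('v, 'e) mgraph \<Rightarrow> 'v \<Rightarrow> ('w, 'f) mgraph \<Rightarrow> 'w \<Rightarrow> nat \<Rightarrow>
    (nat, nat \<times> nat) mgraph \<Rightarrow> ('v + 'w + nat, 'e + 'f + nat \<times> nat) mgraph" where
  "glue_two G g H h m C =
     (let cv = (\<lambda>k. if k = 0 then Inl g else if k = m then Inr (Inl h) else Inr (Inr k)) in
     \<lparr> verts = Inl ` verts G \<union> (Inr \<circ> Inl) ` verts H \<union> cv ` verts C,
       edges = Inl ` edges G \<union> (Inr \<circ> Inl) ` edges H \<union> (Inr \<circ> Inr) ` edges C,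
       src = case_sum (\<lambda>e. Inl (src G e)) (case_sum (\<lambda>e. Inr (Inl (src H e))) (\<lambda>e. cv (src C e))),
       tgt = case_sum (\<lambda>e. Inl (tgt G e)) (case_sum (\<lambda>e. Inr (Inl (tgt H e))) (\<lambda>e. cv (tgt C e))),
       len = case_sum (len G) (case_sum (len H) (len C)) \<rparr>)"

definition glue_one :: "('v, 'e) mgraph \<Rightarrow> 'v \<Rightarrow> 'v \<Rightarrow> nat \<Rightarrow>
    (nat, nat \<times> nat) mgraph \<Rightarrow> ('v + nat, 'e + nat \<times> nat) mgraph" where
  "glue_one G g1 g2 m C =
     (let cv = (\<lambda>k. if k = 0 then Inl g1 else if k = m then Inl g2 else Inr k) in
     \<lparr> verts = Inl ` verts G \<union> cv ` verts C,
       edges = Inl ` edges G \<union> Inr ` edges C,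
       src = case_sum (\<lambda>e. Inl (src G e)) (\<lambda>e. cv (src C e)),
       tgt = case_sum (\<lambda>e. Inl (tgt G e)) (\<lambda>e. cv (tgt C e)),
       len = case_sum (len G) (len C) \<rparr>)"

end

theory Submission
  imports Defs
begin

text \<open>
  Split an eigenfunction on each pumpkin of the chain into its mean over the d parallel edges
  and the deviations from that mean. Continuity forces the deviations to vanish at both ends of
  every pumpkin, and since the interior chain vertices meet no other edges, continuity and
  Kirchhoff there make the means of consecutive pumpkins glue to a single solution W of
  y'' = - lam y along the whole chain, a function of arc length. Now rearrange the pumpkins,
  each carrying its deviations along, and lay W along the new arc length: this is again an
  eigenfunction. The total length of the chain is unchanged, so the values and fluxes at the
  two end vertices, where the rest of the graph is attached, stay the same. The map is linear
  and injective, so multiplicities can only grow, and by symmetry they agree.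
\<close>

definition cos_lam :: "real \<Rightarrow> real \<Rightarrow> real" where
  "cos_lam lam t =
     (if lam > 0 then cos (sqrt lam * t) else if lam = 0 then 1 else cosh (sqrt (- lam) * t))"

definition sin_lam :: "real \<Rightarrow> real \<Rightarrow> real" where
  "sin_lam lam t =
     (if lam > 0 then sin (sqrt lam * t) / sqrt lam else if lam = 0 then t
      else sinh (sqrt (- lam) * t) / sqrt (- lam))"

lemma cos_lam_0 [simp]: "cos_lam lam 0 = 1"
  by (simp add: cos_lam_def)

lemma sin_lam_0 [simp]: "sin_lam lam 0 = 0"
  by (simp add: sin_lam_def)

lemma real_sign_cases:
  fixes lam :: real
  obtains (pos) k where "k > 0" "lam = k\<^sup>2" | (zero) "lam = 0" | (neg) k where "k > 0" "lam = - k\<^sup>2"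
proof (cases "lam > 0")
  case True
  then show ?thesis using pos[of "sqrt lam"] by simp
next
  case False
  then show ?thesis using zero neg[of "sqrt (- lam)"] by (cases "lam = 0") simp_all
qed

lemma
  assumes "k > 0"
  shows cos_lam_pos: "cos_lam (k\<^sup>2) = (\<lambda>t. cos (k * t))"
    and sin_lam_pos: "sin_lam (k\<^sup>2) = (\<lambda>t. sin (k * t) / k)"
    and cos_lam_neg: "cos_lam (- k\<^sup>2) = (\<lambda>t. cosh (k * t))"
    and sin_lam_neg: "sin_lam (- k\<^sup>2) = (\<lambda>t. sinh (k * t) / k)"
  using assms by (auto simp: cos_lam_def sin_lam_def)

lemma cos_lam_has_real_derivative: "(cos_lam lam has_real_derivative - lam * sin_lam lam t) (at t)"
proof (cases lam rule: real_sign_cases)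
  case (pos k)
  have "((\<lambda>t. cos (k * t)) has_real_derivative - k\<^sup>2 * (sin (k * t) / k)) (at t)"
    using pos(1) by (auto intro!: derivative_eq_intros simp: power2_eq_square)
  then show ?thesis using pos by (simp add: cos_lam_pos sin_lam_pos)
next
  case zero
  then show ?thesis by (simp add: cos_lam_def[abs_def])
next
  case (neg k)
  have "((\<lambda>t. cosh (k * t)) has_real_derivative k\<^sup>2 * (sinh (k * t) / k)) (at t)"
    using neg(1) by (auto intro!: derivative_eq_intros simp: power2_eq_square)
  then show ?thesis using neg by (simp add: cos_lam_neg sin_lam_neg)
qed

lemma sin_lam_has_real_derivative: "(sin_lam lam has_real_derivative cos_lam lam t) (at t)"
proof (cases lam rule: real_sign_cases)
  case (pos k)
  have "((\<lambda>t. sin (k * t) / k) has_real_derivative cos (k * t) * k / k) (at t)"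
    by (rule DERIV_cdivide) (auto intro!: derivative_eq_intros)
  then show ?thesis using pos by (simp add: cos_lam_pos sin_lam_pos)
next
  case zero
  then show ?thesis by (simp add: cos_lam_def sin_lam_def[abs_def])
next
  case (neg k)
  have "((\<lambda>t. sinh (k * t) / k) has_real_derivative cosh (k * t) * k / k) (at t)"
    by (rule DERIV_cdivide) (auto intro!: derivative_eq_intros)
  then show ?thesis using neg by (simp add: cos_lam_neg sin_lam_neg)
qed

lemma cos_lam_squared_add_sin_lam: "(cos_lam lam t)\<^sup>2 + lam * (sin_lam lam t)\<^sup>2 = 1"
proof (cases lam rule: real_sign_cases)
  case (pos k)
  then show ?thesis by (simp add: cos_lam_pos sin_lam_pos power_divide)
next
  case zero
  then show ?thesis by (simp add: cos_lam_def)
next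
  case (neg k)
  then show ?thesis by (simp add: cos_lam_neg sin_lam_neg power_divide hyperbolic_pythagoras)
qed

definition ode_sol :: "real \<Rightarrow> real \<Rightarrow> real \<Rightarrow> real \<Rightarrow> real" where
  "ode_sol lam a b t = a * cos_lam lam t + b * sin_lam lam t"

lemma ode_sol_0 [simp]: "ode_sol lam a b 0 = a"
  by (simp add: ode_sol_def)

lemma has_real_derivative_ode_sol [derivative_intros]:
  assumes "(g has_real_derivative g') (at x within S)"
  shows "((\<lambda>x. ode_sol lam a b (g x)) has_real_derivative ode_sol lam b (- lam * a) (g x) * g')
    (at x within S)"
proof -
  have "(ode_sol lam a b has_real_derivative ode_sol lam b (- lam * a) t) (at t)" for t
    unfolding ode_sol_def[abs_def]
    by (auto intro!: derivative_eq_intros cos_lam_has_real_derivative sin_lam_has_real_derivative)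
  from DERIV_chain2[OF this assms] show ?thesis .
qed

lemma sum_ode_sol:
  "(\<Sum>i\<in>I. c i * ode_sol lam (a i) (b i) t) = ode_sol lam (\<Sum>i\<in>I. c i * a i) (\<Sum>i\<in>I. c i * b i) t"
  by (simp add: ode_sol_def distrib_left sum.distrib sum_distrib_left sum_distrib_right mult_ac)

lemma has_real_derivative_within_interval_unique:
  assumes "a < b" and "x \<in> {a..b}"
    and "(f has_real_derivative D) (at x within {a..b})" and "(f has_real_derivative E) (at x within {a..b})"
  shows "D = E"
  using assms
  by (metis has_real_derivative_iff_has_vector_derivative vector_derivative_within_closed_interval)

lemma ode_sol_vanishing:
  assumes "L > 0" and "\<And>x. x \<in> {0..L} \<Longrightarrow> ode_sol lam a b x = 0"
  shows "a = 0" and "b = 0"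
proof -
  show "a = 0" using assms(2)[of 0] assms(1) by simp
  have "((\<lambda>x. ode_sol lam a b x) has_real_derivative ode_sol lam b (- lam * a) 0 * 1)
      (at 0 within {0..L})"
    by (rule has_real_derivative_ode_sol) (rule DERIV_ident)
  then have "(ode_sol lam a b has_real_derivative b) (at 0 within {0..L})"
    by simp
  then have "((\<lambda>x. 0) has_real_derivative b) (at 0 within {0..L})"
    by (rule has_field_derivative_transform_within[OF _ zero_less_one]) (use assms in auto)
  moreover have "((\<lambda>x. 0) has_real_derivative 0) (at 0 within {0..L})"
    by simp
  ultimately show "b = 0"
    using assms(1) by (intro has_real_derivative_within_interval_unique) auto
qed

definition ode_solution :: "real \<Rightarrow> real \<Rightarrow> (real \<Rightarrow> real) \<Rightarrow> (real \<Rightarrow> real) \<Rightarrow> bool" where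
  "ode_solution lam L y y' \<longleftrightarrow>
     (\<forall>x\<in>{0..L}. (y has_real_derivative y' x) (at x within {0..L}) \<and>
                 (y' has_real_derivative - lam * y x) (at x within {0..L}))"

lemma ode_solution_ode_sol:
  "ode_solution lam L (\<lambda>x. ode_sol lam a b (c + x)) (\<lambda>x. ode_sol lam b (- lam * a) (c + x))"
proof -
  have "ode_sol lam (- lam * a) (- lam * b) t = - lam * ode_sol lam a b t" for t
    by (simp add: ode_sol_def algebra_simps)
  then show ?thesis
    unfolding ode_solution_def by (auto intro!: derivative_eq_intros)
qed

lemma ode_solution_add:
  assumes "ode_solution lam L y y'" and "ode_solution lam L z z'"
  shows "ode_solution lam L (\<lambda>x. y x + z x) (\<lambda>x. y' x + z' x)"
  using assms unfolding ode_solution_def by (auto intro!: derivative_eq_intros simp: algebra_simps)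

lemma ode_solution_diff:
  assumes "ode_solution lam L y y'" and "ode_solution lam L z z'"
  shows "ode_solution lam L (\<lambda>x. y x - z x) (\<lambda>x. y' x - z' x)"
  using assms unfolding ode_solution_def by (auto intro!: derivative_eq_intros simp: algebra_simps)

lemma ode_solution_mean:
  fixes d :: nat
  assumes "\<And>j. j < d \<Longrightarrow> ode_solution lam L (y j) (y' j)"
  shows "ode_solution lam L (\<lambda>x. (\<Sum>j<d. y j x) / d) (\<lambda>x. (\<Sum>j<d. y' j x) / d)"
  unfolding ode_solution_def
proof (intro ballI conjI)
  fix x assume x: "x \<in> {0..L}"
  have "(y j has_real_derivative y' j x) (at x within {0..L})"
    and "(y' j has_real_derivative - lam * y j x) (at x within {0..L})" if "j < d" for j
    using assms[OF that] x unfolding ode_solution_def by auto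
  then have "((\<lambda>x. (\<Sum>j<d. y j x) / d) has_real_derivative (\<Sum>j<d. y' j x) / d) (at x within {0..L})"
    and "((\<lambda>x. (\<Sum>j<d. y' j x) / d) has_real_derivative (\<Sum>j<d. - lam * y j x) / d)
      (at x within {0..L})"
    by (auto intro!: DERIV_cdivide DERIV_sum)
  then show "((\<lambda>x. (\<Sum>j<d. y j x) / d) has_real_derivative (\<Sum>j<d. y' j x) / d) (at x within {0..L})"
    and "((\<lambda>x. (\<Sum>j<d. y' j x) / d) has_real_derivative - lam * ((\<Sum>j<d. y j x) / d))
      (at x within {0..L})"
    by (simp_all add: sum_negf sum_distrib_left[symmetric])
qed

lemma has_real_derivative_zero_interval_const:
  assumes "\<And>t. t \<in> {0..L} \<Longrightarrow> (W has_real_derivative 0) (at t within {0..L})"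
    and "x \<in> {0..L}"
  shows "W x = W 0"
proof -
  obtain k where "\<forall>t\<in>{0..L}. W t = k"
    using has_field_derivative_zero_constant[of "{0..L}" W] assms(1) by auto
  moreover have "0 \<in> {0..L}"
    using assms(2) by simp
  ultimately show ?thesis
    using assms(2) by simp
qed

lemma ode_solution_first_integrals:
  assumes sol: "ode_solution lam L y y'" and x: "x \<in> {0..L}"
  shows "y x * cos_lam lam x - y' x * sin_lam lam x = y 0"
    and "lam * y x * sin_lam lam x + y' x * cos_lam lam x = y' 0"
proof -
  have cos: "(cos_lam lam has_real_derivative - lam * sin_lam lam t) (at t within {0..L})"
    and sin: "(sin_lam lam has_real_derivative cos_lam lam t) (at t within {0..L})" for t
    by (rule has_field_derivative_at_within,
        rule cos_lam_has_real_derivative sin_lam_has_real_derivative)+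
  have "((\<lambda>x. y x * cos_lam lam x - y' x * sin_lam lam x) has_real_derivative 0) (at t within {0..L})"
    if "t \<in> {0..L}" for t
    using sol that cos sin unfolding ode_solution_def
    by (auto intro!: derivative_eq_intros simp: algebra_simps)
  from has_real_derivative_zero_interval_const[OF this x]
  show "y x * cos_lam lam x - y' x * sin_lam lam x = y 0"
    by simp
  have "((\<lambda>x. lam * y x * sin_lam lam x + y' x * cos_lam lam x) has_real_derivative 0)
      (at t within {0..L})" if "t \<in> {0..L}" for t
    using sol that cos sin unfolding ode_solution_def
    by (auto intro!: derivative_eq_intros simp: algebra_simps)
  from has_real_derivative_zero_interval_const[OF this x]
  show "lam * y x * sin_lam lam x + y' x * cos_lam lam x = y' 0"
    by simp
qed

lemma ode_solution_eq_ode_sol: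
  assumes "ode_solution lam L y y'" and "x \<in> {0..L}"
  shows "y x = ode_sol lam (y 0) (y' 0) x" and "y' x = ode_sol lam (y' 0) (- lam * y 0) x"
proof -
  define c s where "c = cos_lam lam x" and "s = sin_lam lam x"
  have w1: "y x * c - y' x * s = y 0" and w2: "lam * y x * s + y' x * c = y' 0"
    unfolding c_def s_def using ode_solution_first_integrals[OF assms] by auto
  have pyth: "c\<^sup>2 + lam * s\<^sup>2 = 1"
    unfolding c_def s_def by (rule cos_lam_squared_add_sin_lam)
  have "y x = y x * (c\<^sup>2 + lam * s\<^sup>2)"
    using pyth by simp
  also have "\<dots> = c * (y x * c - y' x * s) + s * (lam * y x * s + y' x * c)"
    by (simp add: algebra_simps power2_eq_square)
  finally show "y x = ode_sol lam (y 0) (y' 0) x"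
    unfolding w1 w2 by (simp add: ode_sol_def c_def s_def mult.commute)
  have "y' x = y' x * (c\<^sup>2 + lam * s\<^sup>2)"
    using pyth by simp
  also have "\<dots> = - lam * s * (y x * c - y' x * s) + c * (lam * y x * s + y' x * c)"
    by (simp add: algebra_simps power2_eq_square)
  finally show "y' x = ode_sol lam (y' 0) (- lam * y 0) x"
    unfolding w1 w2 by (simp add: ode_sol_def c_def s_def algebra_simps)
qed

lemma ode_solution_unique:
  assumes "ode_solution lam L y y'" and "ode_solution lam L z z'"
    and "y 0 = z 0" and "y' 0 = z' 0" and "x \<in> {0..L}"
  shows "y x = z x" and "y' x = z' x"
  using ode_solution_eq_ode_sol[OF assms(1,5)] ode_solution_eq_ode_sol[OF assms(2,5)] assms(3,4)
  by simp_all

lemma ode_solution_vector_derivative: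
  assumes "ode_solution lam L y y'" and "L > 0" and "x \<in> {0..L}"
  shows "vector_derivative y (at x within {0..L}) = y' x"
  using assms unfolding ode_solution_def
  by (metis has_real_derivative_iff_has_vector_derivative vector_derivative_within_closed_interval)

lemma ode_solution_with_vector_derivative:
  assumes "ode_solution lam L y y'" and "L > 0"
  shows "ode_solution lam L y (\<lambda>x. vector_derivative y (at x within {0..L}))"
  unfolding ode_solution_def
proof (intro ballI conjI)
  fix x assume x: "x \<in> {0..L}"
  have eq: "y' t = vector_derivative y (at t within {0..L})" if "t \<in> {0..L}" for t
    using ode_solution_vector_derivative[OF assms that] by simp
  have y: "(y has_real_derivative y' x) (at x within {0..L})"
    and y': "(y' has_real_derivative - lam * y x) (at x within {0..L})"
    using assms(1) x unfolding ode_solution_def by auto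
  show "(y has_real_derivative vector_derivative y (at x within {0..L})) (at x within {0..L})"
    using y unfolding eq[OF x] .
  show "((\<lambda>x. vector_derivative y (at x within {0..L})) has_real_derivative - lam * y x)
      (at x within {0..L})"
    using y' x eq by (rule has_field_derivative_transform_within[OF _ zero_less_one])
qed

definition edge_end :: "('v, 'e) mgraph \<Rightarrow> 'v \<Rightarrow> 'e \<Rightarrow> real \<Rightarrow> bool" where
  "edge_end G v e x \<longleftrightarrow> (src G e = v \<and> x = 0) \<or> (tgt G e = v \<and> x = len G e)"

definition edge_deriv :: "('v, 'e) mgraph \<Rightarrow> ('e \<Rightarrow> real \<Rightarrow> real) \<Rightarrow> 'e \<Rightarrow> real \<Rightarrow> real" where
  "edge_deriv G phi e x = vector_derivative (phi e) (at x within {0..len G e})"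

definition flux_on :: "'e set \<Rightarrow> ('v, 'e) mgraph \<Rightarrow> ('e \<Rightarrow> real \<Rightarrow> real) \<Rightarrow> 'v \<Rightarrow> real" where
  "flux_on E G phi v =
     (\<Sum>e\<in>{e\<in>E. src G e = v}. edge_deriv G phi e 0) -
     (\<Sum>e\<in>{e\<in>E. tgt G e = v}. edge_deriv G phi e (len G e))"

lemma eigenfunction_iff:
  "eigenfunction G lam phi \<longleftrightarrow>
     (\<forall>e\<in>edges G. \<exists>phi'. ode_solution lam (len G e) (phi e) phi') \<and>
     (\<forall>v\<in>verts G. \<forall>e1\<in>edges G. \<forall>e2\<in>edges G. \<forall>x1 x2.
        edge_end G v e1 x1 \<longrightarrow> edge_end G v e2 x2 \<longrightarrow> phi e1 x1 = phi e2 x2) \<and>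
     (\<forall>v\<in>verts G. flux_on (edges G) G phi v = 0)"
  unfolding eigenfunction_def ode_solution_def edge_end_def flux_on_def edge_deriv_def ..

lemma eigenfunction_edge_ode:
  assumes "eigenfunction G lam phi" and "e \<in> edges G" and "len G e > 0"
  shows "ode_solution lam (len G e) (phi e) (edge_deriv G phi e)"
proof -
  obtain phi' where "ode_solution lam (len G e) (phi e) phi'"
    using assms(1,2) unfolding eigenfunction_iff by blast
  from ode_solution_with_vector_derivative[OF this assms(3)] show ?thesis
    unfolding edge_deriv_def[abs_def] .
qed

lemma flux_on_Un:
  assumes "finite A" and "finite B" and "A \<inter> B = {}"
  shows "flux_on (A \<union> B) G phi v = flux_on A G phi v + flux_on B G phi v"
proof -
  have split: "(\<Sum>e\<in>{e\<in>A \<union> B. P e}. f e) = (\<Sum>e\<in>{e\<in>A. P e}. f e) + (\<Sum>e\<in>{e\<in>B. P e}. f e)"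
    for P and f :: "'a \<Rightarrow> real"
  proof -
    have "{e\<in>A \<union> B. P e} = {e\<in>A. P e} \<union> {e\<in>B. P e}" by auto
    then show ?thesis
      by (simp only:) (rule sum.union_disjoint, use assms in auto)
  qed
  show ?thesis unfolding flux_on_def split by simp
qed

locale permuted_pumpkin_chain =
  fixes G1 G2 :: "('v, 'e) mgraph" and ce :: "nat \<times> nat \<Rightarrow> 'e" and cv :: "nat \<Rightarrow> 'v"
    and d m :: nat and L :: "nat \<Rightarrow> real" and \<pi> :: "nat \<Rightarrow> nat"
  assumes d_pos: "d > 0" and m_pos: "m > 0"
    and L_pos: "\<And>i. i < m \<Longrightarrow> L i > 0"
    and permutation: "\<pi> permutes {..<m}"
    and verts_eq: "verts G2 = verts G1" and edges_eq: "edges G2 = edges G1"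
    and src_eq: "src G2 = src G1" and tgt_eq: "tgt G2 = tgt G1"
    and finite_edges: "finite (edges G1)"
    and ce_in_edges: "\<And>i j. i < m \<Longrightarrow> j < d \<Longrightarrow> ce (i, j) \<in> edges G1"
    and inj_ce: "inj_on ce ({..<m} \<times> {..<d})"
    and src_ce: "\<And>i j. i < m \<Longrightarrow> j < d \<Longrightarrow> src G1 (ce (i, j)) = cv i"
    and tgt_ce: "\<And>i j. i < m \<Longrightarrow> j < d \<Longrightarrow> tgt G1 (ce (i, j)) = cv (Suc i)"
    and len1_ce: "\<And>i j. i < m \<Longrightarrow> j < d \<Longrightarrow> len G1 (ce (i, j)) = L i"
    and len2_ce: "\<And>i j. i < m \<Longrightarrow> j < d \<Longrightarrow> len G2 (ce (i, j)) = L (\<pi> i)"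
    and len_off_chain:
      "\<And>e. e \<in> edges G1 \<Longrightarrow> e \<notin> ce ` ({..<m} \<times> {..<d}) \<Longrightarrow> len G2 e = len G1 e"
    and inj_cv: "inj_on cv {..m}"
    and cv_in_verts: "\<And>k. k \<le> m \<Longrightarrow> cv k \<in> verts G1"
    and interior_off_chain: "\<And>e k. e \<in> edges G1 \<Longrightarrow> e \<notin> ce ` ({..<m} \<times> {..<d}) \<Longrightarrow>
      0 < k \<Longrightarrow> k < m \<Longrightarrow> src G1 e \<noteq> cv k \<and> tgt G1 e \<noteq> cv k"
begin

definition chain_edges :: "'e set" where
  "chain_edges = ce ` ({..<m} \<times> {..<d})"

definition offset :: "nat \<Rightarrow> real" where
  "offset r = (\<Sum>k<r. L k)"

definition offset' :: "nat \<Rightarrow> real" where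
  "offset' p = (\<Sum>k<p. L (\<pi> k))"

definition mean :: "('e \<Rightarrow> real \<Rightarrow> real) \<Rightarrow> nat \<Rightarrow> real \<Rightarrow> real" where
  "mean psi r x = (\<Sum>j<d. psi (ce (r, j)) x) / d"

text \<open>
  For an eigenfunction phi of G1, the single solution of y'' = - lam y that the pumpkin means of
  phi follow along the chain (mean_eq_profile), as a function of arc length from cv 0; profile'
  is its derivative. Position r of G1 starts at arc length offset r, position p of G2 at
  offset' p.
\<close>

definition profile :: "real \<Rightarrow> ('e \<Rightarrow> real \<Rightarrow> real) \<Rightarrow> real \<Rightarrow> real" where
  "profile lam phi = ode_sol lam (phi (ce (0, 0)) 0) (mean (edge_deriv G1 phi) 0 0)"

definition profile' :: "real \<Rightarrow> ('e \<Rightarrow> real \<Rightarrow> real) \<Rightarrow> real \<Rightarrow> real" where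
  "profile' lam phi = ode_sol lam (mean (edge_deriv G1 phi) 0 0) (- lam * phi (ce (0, 0)) 0)"

text \<open>
  The pumpkin at position \<pi> p of G1 moves to position p of G2, keeping its deviation from the
  profile.
\<close>

definition transfer :: "real \<Rightarrow> ('e \<Rightarrow> real \<Rightarrow> real) \<Rightarrow> 'e \<Rightarrow> real \<Rightarrow> real" where
  "transfer lam phi e x =
     (if e \<in> chain_edges then
        (case the_inv_into ({..<m} \<times> {..<d}) ce e of (p, j) \<Rightarrow>
           phi (ce (\<pi> p, j)) x - profile lam phi (offset (\<pi> p) + x) + profile lam phi (offset' p + x))
      else phi e x)"

lemma ce_eq_iff:
  assumes "i < m" "j < d" "i' < m" "j' < d"
  shows "ce (i, j) = ce (i', j') \<longleftrightarrow> i = i' \<and> j = j'"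
  using inj_onD[OF inj_ce] assms by auto

lemma cv_eq_iff: "i \<le> m \<Longrightarrow> k \<le> m \<Longrightarrow> cv i = cv k \<longleftrightarrow> i = k"
  using inj_onD[OF inj_cv] by auto

lemma permutation_less: "p < m \<Longrightarrow> \<pi> p < m"
  using permutes_in_image[OF permutation] by simp

lemma chain_edges_subset: "chain_edges \<subseteq> edges G1"
  using ce_in_edges by (auto simp: chain_edges_def)

lemma transfer_ce:
  assumes "p < m" "j < d"
  shows "transfer lam phi (ce (p, j)) =
    (\<lambda>x. phi (ce (\<pi> p, j)) x - profile lam phi (offset (\<pi> p) + x) + profile lam phi (offset' p + x))"
proof -
  have "the_inv_into ({..<m} \<times> {..<d}) ce (ce (p, j)) = (p, j)"
    using assms by (intro the_inv_into_f_f[OF inj_ce]) auto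
  then show ?thesis using assms by (auto simp: transfer_def chain_edges_def)
qed

lemma transfer_off_chain: "e \<notin> chain_edges \<Longrightarrow> transfer lam phi e = phi e"
  by (auto simp: transfer_def)

lemma offset_Suc: "offset (Suc r) = offset r + L r"
  and offset'_Suc: "offset' (Suc p) = offset' p + L (\<pi> p)"
  by (simp_all add: offset_def offset'_def)

lemma offset_0: "offset 0 = 0" and offset'_0: "offset' 0 = 0"
  by (simp_all add: offset_def offset'_def)

lemma offset'_total: "offset' m = offset m"
  unfolding offset_def offset'_def using sum.permute[OF permutation, of L] by (simp add: comp_def)

lemma sum_chain_row: "i < m \<Longrightarrow> (\<Sum>e\<in>(\<lambda>j. ce (i, j)) ` {..<d}. f e) = (\<Sum>j<d. f (ce (i, j)))"
  by (subst sum.reindex) (auto simp: inj_on_def ce_eq_iff)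

lemma chain_edges_src_cv:
  "k \<le> m \<Longrightarrow> {e\<in>chain_edges. src G1 e = cv k} = (if k < m then (\<lambda>j. ce (k, j)) ` {..<d} else {})"
  by (auto simp: chain_edges_def src_ce cv_eq_iff)

lemma chain_edges_tgt_cv:
  "k \<le> m \<Longrightarrow> {e\<in>chain_edges. tgt G1 e = cv k} = (if 0 < k then (\<lambda>j. ce (k - 1, j)) ` {..<d} else {})"
  by (auto simp: chain_edges_def tgt_ce cv_eq_iff image_iff) (metis lessThan_iff)

lemma chain_edges_off_cv:
  assumes "v \<notin> cv ` {..m}"
  shows "{e\<in>chain_edges. src G1 e = v} = {}" and "{e\<in>chain_edges. tgt G1 e = v} = {}"
  using assms by (auto simp: chain_edges_def src_ce tgt_ce)

lemma edges_at_interior_cv: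
  assumes "0 < k" "k < m"
  shows "{e\<in>edges G1 - chain_edges. src G1 e = cv k} = {}"
    and "{e\<in>edges G1 - chain_edges. tgt G1 e = cv k} = {}"
  using interior_off_chain assms by (auto simp: chain_edges_def)

lemma flux_on_edges_split:
  "flux_on (edges G1) G psi v = flux_on (edges G1 - chain_edges) G psi v + flux_on chain_edges G psi v"
proof -
  have "edges G1 = (edges G1 - chain_edges) \<union> chain_edges"
    using chain_edges_subset by auto
  moreover have "finite chain_edges"
    using finite_subset[OF chain_edges_subset finite_edges] .
  ultimately show ?thesis
    using finite_edges by (metis Diff_disjoint finite_Diff flux_on_Un inf_commute)
qed

lemma flux_on_chain_edges_cv:
  assumes "src G = src G1" and "tgt G = tgt G1" and "k \<le> m"
    and out_sum: "\<And>r. r < m \<Longrightarrow> (\<Sum>j<d. edge_deriv G psi (ce (r, j)) 0) = real d * F (off r)"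
    and in_sum: "\<And>r. r < m \<Longrightarrow>
      (\<Sum>j<d. edge_deriv G psi (ce (r, j)) (len G (ce (r, j)))) = real d * F (off (Suc r))"
  shows "flux_on chain_edges G psi (cv k) =
    (if k < m then real d * F (off k) else 0) - (if 0 < k then real d * F (off k) else 0)"
proof -
  have "(\<Sum>e\<in>{e\<in>chain_edges. src G e = cv k}. edge_deriv G psi e 0) = (if k < m then real d * F (off k) else 0)"
    using assms(1,3) out_sum by (simp add: chain_edges_src_cv sum_chain_row)
  moreover have "(\<Sum>e\<in>{e\<in>chain_edges. tgt G e = cv k}. edge_deriv G psi e (len G e)) =
      (if 0 < k then real d * F (off k) else 0)"
    using assms(2,3) in_sum[of "k - 1"] by (simp add: chain_edges_tgt_cv sum_chain_row)
  ultimately show ?thesis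
    unfolding flux_on_def by simp
qed

lemma flux_on_chain_edges_off_cv:
  assumes "src G = src G1" and "tgt G = tgt G1" and "v \<notin> cv ` {..m}"
  shows "flux_on chain_edges G psi v = 0"
  unfolding flux_on_def assms(1,2) chain_edges_off_cv[OF assms(3)] by simp

lemma edge_end_off_chain:
  assumes "e \<in> edges G1" and "e \<notin> chain_edges"
  shows "edge_end G2 v e x \<longleftrightarrow> edge_end G1 v e x"
  using assms len_off_chain by (simp add: edge_end_def src_eq tgt_eq chain_edges_def)

lemma off_chain_edge_at_cv:
  assumes "e \<in> edges G1" and "e \<notin> chain_edges" and "edge_end G1 (cv k) e x" and "k \<le> m"
  shows "k = 0 \<or> k = m"
proof (rule ccontr)
  assume "\<not> (k = 0 \<or> k = m)"
  then have "0 < k" "k < m" using assms(4) by auto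
  with interior_off_chain[OF assms(1)] assms(2,3) show False
    by (auto simp: edge_end_def chain_edges_def)
qed

lemma ode_solution_profile:
  "ode_solution lam l (\<lambda>x. profile lam phi (c + x)) (\<lambda>x. profile' lam phi (c + x))"
  unfolding profile_def profile'_def by (rule ode_solution_ode_sol)

lemma sum_eq_mean: "(\<Sum>j<d. psi (ce (r, j)) x) = d * mean psi r x"
  using d_pos by (simp add: mean_def)

context
  fixes lam :: real and phi :: "'e \<Rightarrow> real \<Rightarrow> real"
  assumes eigen: "eigenfunction G1 lam phi"
begin

lemma ode_solution_ce:
  "r < m \<Longrightarrow> j < d \<Longrightarrow> ode_solution lam (L r) (phi (ce (r, j))) (edge_deriv G1 phi (ce (r, j)))"
  using eigenfunction_edge_ode[OF eigen ce_in_edges] L_pos len1_ce by metis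

lemma phi_continuity:
  assumes "v \<in> verts G1" "e1 \<in> edges G1" "e2 \<in> edges G1" "edge_end G1 v e1 x1" "edge_end G1 v e2 x2"
  shows "phi e1 x1 = phi e2 x2"
  using eigen assms unfolding eigenfunction_iff by blast

lemma mean_at_start: "r < m \<Longrightarrow> j < d \<Longrightarrow> mean phi r 0 = phi (ce (r, j)) 0"
proof -
  assume r: "r < m" and j: "j < d"
  have "phi (ce (r, i)) 0 = phi (ce (r, j)) 0" if "i < d" for i
    using r j that by (intro phi_continuity[OF cv_in_verts[of r]]) (auto simp: ce_in_edges edge_end_def src_ce)
  then show ?thesis using d_pos by (simp add: mean_def)
qed

lemma mean_at_end: "r < m \<Longrightarrow> j < d \<Longrightarrow> mean phi r (L r) = phi (ce (r, j)) (L r)"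
proof -
  assume r: "r < m" and j: "j < d"
  have "phi (ce (r, i)) (L r) = phi (ce (r, j)) (L r)" if "i < d" for i
    using r j that
    by (intro phi_continuity[OF cv_in_verts[of "Suc r"]]) (auto simp: ce_in_edges edge_end_def tgt_ce len1_ce)
  then show ?thesis using d_pos by (simp add: mean_def)
qed

lemma continuity_between_pumpkins: "Suc r < m \<Longrightarrow> phi (ce (Suc r, 0)) 0 = phi (ce (r, 0)) (L r)"
  using d_pos
  by (intro phi_continuity[OF cv_in_verts[of "Suc r"]]) (auto simp: ce_in_edges edge_end_def src_ce tgt_ce len1_ce)

lemma kirchhoff_between_pumpkins:
  assumes "Suc r < m"
  shows "mean (edge_deriv G1 phi) (Suc r) 0 = mean (edge_deriv G1 phi) r (L r)"
proof -
  have "flux_on (edges G1) G1 phi (cv (Suc r)) = 0"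
    using eigen cv_in_verts assms unfolding eigenfunction_iff by simp
  moreover have "flux_on (edges G1 - chain_edges) G1 phi (cv (Suc r)) = 0"
    unfolding flux_on_def edges_at_interior_cv[OF zero_less_Suc assms] by simp
  ultimately have "flux_on chain_edges G1 phi (cv (Suc r)) = 0"
    by (simp add: flux_on_edges_split)
  then show ?thesis
    using assms by (simp add: flux_on_def chain_edges_src_cv chain_edges_tgt_cv sum_chain_row
        mean_def len1_ce)
qed

lemma mean_ode_solution: "r < m \<Longrightarrow> ode_solution lam (L r) (mean phi r) (mean (edge_deriv G1 phi) r)"
  unfolding mean_def[abs_def] by (rule ode_solution_mean) (rule ode_solution_ce)

lemma mean_eq_profile:
  assumes "r < m" and "x \<in> {0..L r}"
  shows "mean phi r x = profile lam phi (offset r + x)"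
    and "mean (edge_deriv G1 phi) r x = profile' lam phi (offset r + x)"
proof -
  have "mean phi r 0 = profile lam phi (offset r) \<and>
      mean (edge_deriv G1 phi) r 0 = profile' lam phi (offset r)"
    using assms(1)
  proof (induction r)
    case 0
    then show ?case
      using mean_at_start[OF 0 d_pos] by (simp add: offset_0 profile_def profile'_def)
  next
    case (Suc r)
    then have r: "r < m" by simp
    have "L r \<in> {0..L r}" using L_pos[OF r] by simp
    from ode_solution_unique[OF mean_ode_solution[OF r] ode_solution_profile _ _ this] Suc.IH[OF r]
    have "mean phi r (L r) = profile lam phi (offset (Suc r)) \<and>
        mean (edge_deriv G1 phi) r (L r) = profile' lam phi (offset (Suc r))"
      by (simp add: offset_Suc)
    then show ?case
      using mean_at_start[OF Suc.prems d_pos] mean_at_end[OF r d_pos] continuity_between_pumpkins[OF Suc.prems]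
        kirchhoff_between_pumpkins[OF Suc.prems]
      by simp
  qed
  with ode_solution_unique[OF mean_ode_solution[OF assms(1)] ode_solution_profile _ _ assms(2)]
  show "mean phi r x = profile lam phi (offset r + x)"
    and "mean (edge_deriv G1 phi) r x = profile' lam phi (offset r + x)"
    by simp_all
qed

lemma phi_ce_start: "r < m \<Longrightarrow> j < d \<Longrightarrow> phi (ce (r, j)) 0 = profile lam phi (offset r)"
  using mean_eq_profile(1)[of r 0] mean_at_start L_pos by (simp add: less_imp_le)

lemma phi_ce_end: "r < m \<Longrightarrow> j < d \<Longrightarrow> phi (ce (r, j)) (L r) = profile lam phi (offset (Suc r))"
  using mean_eq_profile(1)[of r "L r"] mean_at_end L_pos by (simp add: less_imp_le offset_Suc)

lemma sum_edge_deriv_ce: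
  "r < m \<Longrightarrow> x \<in> {0..L r} \<Longrightarrow>
    (\<Sum>j<d. edge_deriv G1 phi (ce (r, j)) x) = d * profile' lam phi (offset r + x)"
  by (simp add: sum_eq_mean mean_eq_profile)

lemma transfer_ode_solution:
  assumes "p < m" "j < d"
  shows "ode_solution lam (L (\<pi> p)) (transfer lam phi (ce (p, j)))
    (\<lambda>x. edge_deriv G1 phi (ce (\<pi> p, j)) x - profile' lam phi (offset (\<pi> p) + x) +
       profile' lam phi (offset' p + x))"
  unfolding transfer_ce[OF assms]
  by (intro ode_solution_add ode_solution_diff ode_solution_ce ode_solution_profile
      permutation_less assms)

lemma sum_transfer_ce:
  "p < m \<Longrightarrow> x \<in> {0..L (\<pi> p)} \<Longrightarrow>
    (\<Sum>j<d. transfer lam phi (ce (p, j)) x) = d * profile lam phi (offset' p + x)"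
  by (simp add: transfer_ce sum.distrib sum_subtractf sum_eq_mean mean_eq_profile permutation_less)

lemma sum_edge_deriv_transfer_ce:
  assumes "p < m" and "x \<in> {0..L (\<pi> p)}"
  shows "(\<Sum>j<d. edge_deriv G2 (transfer lam phi) (ce (p, j)) x) = d * profile' lam phi (offset' p + x)"
proof -
  have "edge_deriv G2 (transfer lam phi) (ce (p, j)) x =
      edge_deriv G1 phi (ce (\<pi> p, j)) x - profile' lam phi (offset (\<pi> p) + x) +
      profile' lam phi (offset' p + x)" if "j < d" for j
    using ode_solution_vector_derivative[OF transfer_ode_solution[OF assms(1) that] L_pos assms(2)]
      permutation_less assms that
    by (simp add: edge_deriv_def len2_ce)
  then show ?thesis
    using assms permutation_less
    by (simp add: sum.distrib sum_subtractf sum_edge_deriv_ce)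
qed

lemma flux_on_chain_edges_transfer:
  "flux_on chain_edges G2 (transfer lam phi) v = flux_on chain_edges G1 phi v"
proof (cases "v \<in> cv ` {..m}")
  case True
  then obtain k where k: "k \<le> m" "v = cv k" by auto
  have "flux_on chain_edges G1 phi (cv k) =
      (if k < m then d * profile' lam phi (offset k) else 0) -
      (if 0 < k then d * profile' lam phi (offset k) else 0)"
    using L_pos
    by (intro flux_on_chain_edges_cv[OF refl refl k(1)])
      (simp_all add: sum_edge_deriv_ce len1_ce less_imp_le offset_Suc)
  moreover have "flux_on chain_edges G2 (transfer lam phi) (cv k) =
      (if k < m then d * profile' lam phi (offset' k) else 0) -
      (if 0 < k then d * profile' lam phi (offset' k) else 0)"
    using L_pos permutation_less
    by (intro flux_on_chain_edges_cv[OF src_eq tgt_eq k(1)])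
      (simp_all add: sum_edge_deriv_transfer_ce len2_ce less_imp_le offset'_Suc)
  ultimately show ?thesis
    using k by (auto simp: offset_0 offset'_0 offset'_total)
next
  case False
  then show ?thesis
    using flux_on_chain_edges_off_cv[OF refl refl] flux_on_chain_edges_off_cv[OF src_eq tgt_eq] by simp
qed

lemma flux_on_edges_transfer:
  "flux_on (edges G2) G2 (transfer lam phi) v = flux_on (edges G1) G1 phi v"
proof -
  have "flux_on (edges G1 - chain_edges) G2 (transfer lam phi) v =
      flux_on (edges G1 - chain_edges) G1 phi v"
    unfolding flux_on_def src_eq tgt_eq
    by (intro arg_cong2[where f = "(-)"] sum.cong)
      (auto simp: edge_deriv_def transfer_off_chain len_off_chain chain_edges_def)
  then show ?thesis
    unfolding edges_eq flux_on_edges_split flux_on_chain_edges_transfer by simp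
qed

lemma chain_edge_end_value_transfer:
  assumes "e \<in> chain_edges" and "edge_end G2 v e x"
  shows "\<exists>k\<le>m. v = cv k \<and> transfer lam phi e x = profile lam phi (offset' k)"
proof -
  obtain p j where pj: "p < m" "j < d" "e = ce (p, j)"
    using assms(1) by (auto simp: chain_edges_def)
  then consider "v = cv p" "x = 0" | "v = cv (Suc p)" "x = L (\<pi> p)"
    using assms(2) by (auto simp: edge_end_def src_eq tgt_eq src_ce tgt_ce len2_ce)
  then show ?thesis
  proof cases
    case 1
    then show ?thesis
      using pj phi_ce_start permutation_less by (intro exI[of _ p]) (auto simp: transfer_ce)
  next
    case 2
    then show ?thesis
      using pj phi_ce_end permutation_less
      by (intro exI[of _ "Suc p"]) (auto simp: transfer_ce offset_Suc offset'_Suc)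
  qed
qed

lemma chain_end_at_cv:
  assumes "k \<le> m"
  obtains e x where "e \<in> edges G1" "edge_end G1 (cv k) e x" "phi e x = profile lam phi (offset k)"
proof (cases "k < m")
  case True
  then show ?thesis
    using that[of "ce (k, 0)" 0] d_pos by (simp add: ce_in_edges edge_end_def src_ce phi_ce_start)
next
  case False
  then have "m - 1 < m" "Suc (m - 1) = k" using assms m_pos by auto
  then show ?thesis
    using that[of "ce (m - 1, 0)" "L (m - 1)"] d_pos
    by (simp add: ce_in_edges edge_end_def tgt_ce len1_ce phi_ce_end)
qed

lemma transfer_continuity_across_chain_end:
  assumes e: "e \<in> chain_edges" "edge_end G2 v e x"
    and e': "e' \<in> edges G1" "e' \<notin> chain_edges" "edge_end G2 v e' x'"
  shows "transfer lam phi e x = transfer lam phi e' x'"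
proof -
  obtain k where k: "k \<le> m" "v = cv k" "transfer lam phi e x = profile lam phi (offset' k)"
    using chain_edge_end_value_transfer[OF e] by blast
  have e'_end: "edge_end G1 (cv k) e' x'"
    using e' k(2) by (simp add: edge_end_off_chain)
  have "k = 0 \<or> k = m"
    using off_chain_edge_at_cv[OF e'(1,2) e'_end k(1)] .
  then have "offset' k = offset k"
    using offset'_total by (auto simp: offset_0 offset'_0)
  moreover obtain e'' x'' where "e'' \<in> edges G1" "edge_end G1 (cv k) e'' x''"
    "phi e'' x'' = profile lam phi (offset k)"
    using chain_end_at_cv[OF k(1)] .
  ultimately show ?thesis
    using phi_continuity[OF cv_in_verts[OF k(1)] _ e'(1) _ e'_end] k(3) transfer_off_chain[OF e'(2)]
    by simp
qed

lemma transfer_continuity: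
  assumes v: "v \<in> verts G2" and e12: "e1 \<in> edges G2" "e2 \<in> edges G2"
    and ends: "edge_end G2 v e1 x1" "edge_end G2 v e2 x2"
  shows "transfer lam phi e1 x1 = transfer lam phi e2 x2"
proof -
  have e12': "e1 \<in> edges G1" "e2 \<in> edges G1"
    using e12 edges_eq by auto
  show ?thesis
  proof (cases "e1 \<in> chain_edges"; cases "e2 \<in> chain_edges")
    assume "e1 \<in> chain_edges" "e2 \<in> chain_edges"
    then obtain k1 k2
      where k1: "k1 \<le> m" "v = cv k1" "transfer lam phi e1 x1 = profile lam phi (offset' k1)"
        and k2: "k2 \<le> m" "v = cv k2" "transfer lam phi e2 x2 = profile lam phi (offset' k2)"
      using chain_edge_end_value_transfer ends by blast
    then have "k1 = k2" using cv_eq_iff by simp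
    then show ?thesis using k1 k2 by simp
  next
    assume "e1 \<in> chain_edges" "e2 \<notin> chain_edges"
    then show ?thesis
      using transfer_continuity_across_chain_end ends e12' by simp
  next
    assume "e1 \<notin> chain_edges" "e2 \<in> chain_edges"
    then show ?thesis
      using transfer_continuity_across_chain_end[of e2 v x2 e1 x1] ends e12' by simp
  next
    assume off: "e1 \<notin> chain_edges" "e2 \<notin> chain_edges"
    have "v \<in> verts G1"
      using v verts_eq by simp
    from phi_continuity[OF this e12'] ends show ?thesis
      by (simp add: edge_end_off_chain e12' off transfer_off_chain)
  qed
qed

lemma transfer_eigenfunction: "eigenfunction G2 lam (transfer lam phi)"
  unfolding eigenfunction_iff
proof (intro conjI ballI allI impI)
  fix e assume e: "e \<in> edges G2"
  show "\<exists>phi'. ode_solution lam (len G2 e) (transfer lam phi e) phi'"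
  proof (cases "e \<in> chain_edges")
    case True
    then obtain p j where pj: "p < m" "j < d" "e = ce (p, j)"
      by (auto simp: chain_edges_def)
    show ?thesis
      unfolding pj(3) len2_ce[OF pj(1,2)] using transfer_ode_solution[OF pj(1,2)] by blast
  next
    case False
    have "\<forall>e\<in>edges G1. \<exists>phi'. ode_solution lam (len G1 e) (phi e) phi'"
      using eigen unfolding eigenfunction_iff by blast
    then obtain phi' where "ode_solution lam (len G1 e) (phi e) phi'"
      using e edges_eq by auto
    moreover have "len G2 e = len G1 e"
      using len_off_chain e edges_eq False by (simp add: chain_edges_def)
    ultimately show ?thesis
      using transfer_off_chain[OF False] by auto
  qed
next
  fix v e1 e2 x1 x2
  assume "v \<in> verts G2" "e1 \<in> edges G2" "e2 \<in> edges G2" "edge_end G2 v e1 x1" "edge_end G2 v e2 x2"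
  then show "transfer lam phi e1 x1 = transfer lam phi e2 x2"
    by (rule transfer_continuity)
next
  fix v assume "v \<in> verts G2"
  then show "flux_on (edges G2) G2 (transfer lam phi) v = 0"
    using eigen verts_eq unfolding flux_on_edges_transfer eigenfunction_iff by simp
qed

end

lemma transfer_combination_zero_profile:
  assumes eigen: "\<And>i. i < n \<Longrightarrow> eigenfunction G1 lam (Phi i)"
    and zero: "\<forall>e\<in>edges G2. \<forall>x\<in>{0..len G2 e}. (\<Sum>i<n. c i * transfer lam (Phi i) e x) = 0"
  shows "(\<Sum>i<n. c i * profile lam (Phi i) t) = 0"
proof -
  define Y where "Y t = (\<Sum>i<n. c i * profile lam (Phi i) t)" for t
  define a where "a = (\<Sum>i<n. c i * Phi i (ce (0, 0)) 0)"
  define b where "b = (\<Sum>i<n. c i * mean (edge_deriv G1 (Phi i)) 0 0)"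
  have Y_eq: "Y t = ode_sol lam a b t" for t
    unfolding Y_def a_def b_def profile_def sum_ode_sol ..
  \<comment> \<open>on the pumpkin at position 0 of G2 the deviations cancel in the sum over its edges\<close>
  have "ode_sol lam a b x = 0" if x: "x \<in> {0..L (\<pi> 0)}" for x
  proof -
    have "real d * Y x = (\<Sum>i<n. c i * (\<Sum>j<d. transfer lam (Phi i) (ce (0, j)) x))"
      using sum_transfer_ce[OF eigen m_pos x] by (simp add: Y_def offset'_0 sum_distrib_left mult_ac)
    also have "\<dots> = (\<Sum>j<d. \<Sum>i<n. c i * transfer lam (Phi i) (ce (0, j)) x)"
      by (simp add: sum_distrib_left) (rule sum.swap)
    also have "\<dots> = 0"
    proof -
      have "\<forall>j<d. (\<Sum>i<n. c i * transfer lam (Phi i) (ce (0, j)) x) = 0"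
        using zero ce_in_edges[OF m_pos] len2_ce[OF m_pos] edges_eq x by auto
      then show ?thesis by simp
    qed
    finally show ?thesis using d_pos Y_eq by simp
  qed
  then have "a = 0" and "b = 0"
    using ode_sol_vanishing L_pos[OF permutation_less[OF m_pos]] by blast+
  then show ?thesis
    using Y_eq unfolding Y_def by (simp add: ode_sol_def)
qed

lemma transfer_combination_zero:
  assumes eigen: "\<And>i. i < n \<Longrightarrow> eigenfunction G1 lam (Phi i)"
    and zero: "\<forall>e\<in>edges G2. \<forall>x\<in>{0..len G2 e}. (\<Sum>i<n. c i * transfer lam (Phi i) e x) = 0"
    and e: "e \<in> edges G1" and x: "x \<in> {0..len G1 e}"
  shows "(\<Sum>i<n. c i * Phi i e x) = 0"
proof (cases "e \<in> chain_edges")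
  case False
  have "len G2 e = len G1 e"
    using len_off_chain e False by (simp add: chain_edges_def)
  then have "(\<Sum>i<n. c i * transfer lam (Phi i) e x) = 0"
    using zero e x edges_eq by simp
  then show ?thesis
    by (simp add: transfer_off_chain[OF False])
next
  case True
  then obtain r j where rj: "r < m" "j < d" "e = ce (r, j)"
    by (auto simp: chain_edges_def)
  define p where "p = inv \<pi> r"
  have p: "p < m" "\<pi> p = r"
    using rj(1) permutes_inverses(1)[OF permutation] permutes_in_image[OF permutes_inv[OF permutation]]
    by (auto simp: p_def)
  have "0 = (\<Sum>i<n. c i * transfer lam (Phi i) (ce (p, j)) x)"
    using zero ce_in_edges[OF p(1) rj(2)] x rj p by (simp add: edges_eq len1_ce len2_ce)
  also have "\<dots> = (\<Sum>i<n. c i * Phi i e x) - (\<Sum>i<n. c i * profile lam (Phi i) (offset r + x)) +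
      (\<Sum>i<n. c i * profile lam (Phi i) (offset' p + x))"
    by (simp add: transfer_ce p rj distrib_left right_diff_distrib sum.distrib sum_subtractf)
  finally show ?thesis
    by (simp add: transfer_combination_zero_profile[OF eigen zero])
qed

lemma transfer_lin_indep:
  assumes "\<And>i. i < n \<Longrightarrow> eigenfunction G1 lam (Phi i)" and indep: "lin_indep_on G1 n Phi"
  shows "lin_indep_on G2 n (\<lambda>i. transfer lam (Phi i))"
  unfolding lin_indep_on_def
proof (rule allI, rule impI)
  fix c :: "nat \<Rightarrow> real"
  assume "\<forall>e\<in>edges G2. \<forall>x\<in>{0..len G2 e}. (\<Sum>i<n. c i * transfer lam (Phi i) e x) = 0"
  with assms(1) have "\<forall>e\<in>edges G1. \<forall>x\<in>{0..len G1 e}. (\<Sum>i<n. c i * Phi i e x) = 0"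
    using transfer_combination_zero by blast
  with indep show "\<forall>i<n. c i = 0"
    unfolding lin_indep_on_def by blast
qed

lemma eig_mult_mono: "eig_mult G1 lam \<le> eig_mult G2 lam"
  unfolding eig_mult_def
proof (intro Sup_subset_mono subsetI)
  fix z assume "z \<in> {enat n |n. \<exists>Phi. (\<forall>i<n. eigenfunction G1 lam (Phi i)) \<and> lin_indep_on G1 n Phi}"
  then obtain n Phi where n: "z = enat n"
    and Phi: "\<forall>i<n. eigenfunction G1 lam (Phi i)" "lin_indep_on G1 n Phi"
    by blast
  have "\<exists>Psi. (\<forall>i<n. eigenfunction G2 lam (Psi i)) \<and> lin_indep_on G2 n Psi"
    using Phi transfer_eigenfunction transfer_lin_indep
    by (intro exI[of _ "\<lambda>i. transfer lam (Phi i)"]) simp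
  with n show "z \<in> {enat n |n. \<exists>Phi. (\<forall>i<n. eigenfunction G2 lam (Phi i)) \<and> lin_indep_on G2 n Phi}"
    by blast
qed

lemma permuted_pumpkin_chain_swap: "permuted_pumpkin_chain G2 G1 ce cv d m (L \<circ> \<pi>) (inv \<pi>)"
proof -
  have "\<pi> (inv \<pi> i) = i" for i
    using permutes_inverses(1)[OF permutation] .
  then show ?thesis
    by unfold_locales
      (simp_all add: d_pos m_pos L_pos permutation_less permutes_inv[OF permutation] verts_eq edges_eq
        src_eq tgt_eq finite_edges ce_in_edges inj_ce src_ce tgt_ce len1_ce len2_ce len_off_chain
        inj_cv cv_in_verts interior_off_chain)
qed

theorem isospectral_G1_G2: "isospectral G1 G2"
  unfolding isospectral_def
  using eig_mult_mono permuted_pumpkin_chain.eig_mult_mono[OF permuted_pumpkin_chain_swap]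
  by (metis order_antisym)

end

lemma permuted_lengths:
  fixes l :: "nat \<Rightarrow> real"
  assumes "\<sigma> permutes {..<m}" and "\<tau> permutes {..<m}" and "\<forall>i<m. l i > 0"
  shows "inv \<sigma> \<circ> \<tau> permutes {..<m}"
    and "\<And>i. i < m \<Longrightarrow> (l \<circ> \<sigma>) i > 0"
    and "\<And>i. (l \<circ> \<sigma>) ((inv \<sigma> \<circ> \<tau>) i) = l (\<tau> i)"
  using permutes_compose[OF assms(2) permutes_inv[OF assms(1)]] permutes_in_image[OF assms(1)] assms(3)
    permutes_inverses(1)[OF assms(1)]
  by auto

lemma finite_pumpkin_edges: "finite {(i, j). i < m \<and> j < (d :: nat)}" for m :: nat
proof -
  have "{(i, j). i < m \<and> j < d} = {..<m} \<times> {..<d}" by auto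
  then show ?thesis by simp
qed

lemma isospectral_pumpkin_chain:
  assumes "d > 0" and "m > 0" and "\<forall>i<m. l i > 0" and "\<sigma> permutes {..<m}" and "\<tau> permutes {..<m}"
  shows "isospectral (pumpkin_chain d l m \<sigma>) (pumpkin_chain d l m \<tau>)"
proof -
  have "permuted_pumpkin_chain (pumpkin_chain d l m \<sigma>) (pumpkin_chain d l m \<tau>) id id d m
      (l \<circ> \<sigma>) (inv \<sigma> \<circ> \<tau>)"
    using assms(1,2) permuted_lengths[OF assms(4,5,3)] finite_pumpkin_edges
    by unfold_locales (auto simp: pumpkin_chain_def)
  then show ?thesis by (rule permuted_pumpkin_chain.isospectral_G1_G2)
qed

lemma isospectral_glue_two:
  assumes "d > 0" and "m > 0" and "\<forall>i<m. l i > 0" and "\<sigma> permutes {..<m}" and "\<tau> permutes {..<m}"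
    and "wf_mgraph G" and "wf_mgraph H" and "g \<in> verts G" and "h \<in> verts H"
  shows "isospectral (glue_two G g H h m (pumpkin_chain d l m \<sigma>))
                     (glue_two G g H h m (pumpkin_chain d l m \<tau>))"
proof -
  have "permuted_pumpkin_chain
      (glue_two G g H h m (pumpkin_chain d l m \<sigma>)) (glue_two G g H h m (pumpkin_chain d l m \<tau>))
      (Inr \<circ> Inr) (\<lambda>k. if k = 0 then Inl g else if k = m then Inr (Inl h) else Inr (Inr k))
      d m (l \<circ> \<sigma>) (inv \<sigma> \<circ> \<tau>)"
    using assms(1,2,6-9) permuted_lengths[OF assms(4,5,3)] finite_pumpkin_edges
    by unfold_locales
      (auto simp: glue_two_def pumpkin_chain_def wf_mgraph_def inj_on_def split: if_splits)
  then show ?thesis by (rule permuted_pumpkin_chain.isospectral_G1_G2)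
qed

lemma isospectral_glue_one:
  assumes "d > 0" and "m > 0" and "\<forall>i<m. l i > 0" and "\<sigma> permutes {..<m}" and "\<tau> permutes {..<m}"
    and "wf_mgraph G" and "g1 \<in> verts G" and "g2 \<in> verts G" and "g1 \<noteq> g2"
  shows "isospectral (glue_one G g1 g2 m (pumpkin_chain d l m \<sigma>))
                     (glue_one G g1 g2 m (pumpkin_chain d l m \<tau>))"
proof -
  have "permuted_pumpkin_chain
      (glue_one G g1 g2 m (pumpkin_chain d l m \<sigma>)) (glue_one G g1 g2 m (pumpkin_chain d l m \<tau>))
      Inr (\<lambda>k. if k = 0 then Inl g1 else if k = m then Inl g2 else Inr k)
      d m (l \<circ> \<sigma>) (inv \<sigma> \<circ> \<tau>)"
    using assms(1,2,6-9) permuted_lengths[OF assms(4,5,3)] finite_pumpkin_edges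
    by unfold_locales
      (auto simp: glue_one_def pumpkin_chain_def wf_mgraph_def inj_on_def split: if_splits)
  then show ?thesis by (rule permuted_pumpkin_chain.isospectral_G1_G2)
qed

theorem theorem2:
  fixes d m :: nat and l :: "nat \<Rightarrow> real" and \<sigma> \<tau> :: "nat \<Rightarrow> nat"
  assumes "d \<ge> 2" and "m \<ge> 1"
    and "\<forall>i<m. l i > 0"
    and "\<sigma> permutes {..<m}" and "\<tau> permutes {..<m}"
  shows "isospectral (pumpkin_chain d l m \<sigma>) (pumpkin_chain d l m \<tau>) \<and>
    (\<forall>(G :: ('v, 'e) mgraph) (H :: ('w, 'f) mgraph) g h.
       wf_mgraph G \<longrightarrow> wf_mgraph H \<longrightarrow> g \<in> verts G \<longrightarrow> h \<in> verts H \<longrightarrow>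
       isospectral (glue_two G g H h m (pumpkin_chain d l m \<sigma>))
                   (glue_two G g H h m (pumpkin_chain d l m \<tau>))) \<and>
    (\<forall>(G :: ('u, 'a) mgraph) g1 g2.
       wf_mgraph G \<longrightarrow> g1 \<in> verts G \<longrightarrow> g2 \<in> verts G \<longrightarrow> g1 \<noteq> g2 \<longrightarrow>
       isospectral (glue_one G g1 g2 m (pumpkin_chain d l m \<sigma>))
                   (glue_one G g1 g2 m (pumpkin_chain d l m \<tau>)))"
proof -
  have "d > 0" "m > 0"
    using assms(1,2) by simp_all
  with assms(3-5) show ?thesis
    by (simp add: isospectral_pumpkin_chain isospectral_glue_two isospectral_glue_one)
qed

end
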